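(* Let $n>0$ be a fixed integer. Then for any integer $b>0$ there exist infinitely many integers $a>0$ such that the lattice $\mathbb{L}_{ab}$ contains no nonzero isotropic vector and $\mu(\mathbb{L}_{ab})<-n$, i.e. $\mathbb{L}_{ab}$ does not represent any of $0,-1,-2,\dots,-n$ by a nonzero vector.
   Context: For an integer $c>0$, $\mathbb{L}_c$ denotes the lattice $\mathbb{Z}^2$ with quadratic form $q(x,y)=x^2-cy^2$. A lattice represents $n$ if some nonzero vector $v$ has $q(v)=n$. For a lattice $\mathbb{L}$, $\mu(\mathbb{L})$ is the largest negative integer of the form $q(v)$, $v\in\mathbb{L}$. *)

theory Defs
  imports Main
begin

text \<open>The lattice L_c = Z^2 with quadratic form q_c(x,y) = x^2 - c*y^2.\<close>
definition qform :: "int \<Rightarrow> int \<times> int \<Rightarrow> int" where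
  "qform c v = (fst v)^2 - c * (snd v)^2"

definition represents :: "int \<Rightarrow> int \<Rightarrow> bool" where
  "represents c m \<longleftrightarrow> (\<exists>v. v \<noteq> (0,0) \<and> qform c v = m)"

definition has_isotropic :: "int \<Rightarrow> bool" where
  "has_isotropic c \<longleftrightarrow> represents c 0"

definition mu :: "int \<Rightarrow> int" where
  "mu c = (GREATEST m. m < 0 \<and> (\<exists>v. qform c v = m))"

end

theory Submission
  imports Defs "HOL-Library.Infinite_Set"
begin

text \<open>For \<open>c = N\<^sup>2 - 1\<close> the unit \<open>N + \<surd>c\<close> of norm 1 gives a descent on the solutions of
  \<open>x\<^sup>2 - c y\<^sup>2 = m\<close>: a solution with \<open>y > 0\<close> and \<open>2 - 2N < m \<le> 0\<close> is mapped, by multiplication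
  with \<open>N - \<surd>c\<close>, to one with a strictly smaller positive \<open>y\<close>. Hence \<open>q\<^sub>c\<close> takes no value in
  \<open>(2 - 2N, 0]\<close> on nonzero vectors, while \<open>q\<^sub>c(N - 1, 1) = 2 - 2N\<close>, so \<open>\<mu>(\<int>\<^sup>2, q\<^sub>c) = 2 - 2N\<close>.
  Taking \<open>N = bt + 1\<close> and \<open>a = t(bt + 2)\<close>, so that \<open>ab = N\<^sup>2 - 1\<close>, gives infinitely many \<open>a\<close>.\<close>

lemma qform_mult_unit:
  fixes N x y :: int
  shows "qform (N\<^sup>2 - 1) (N * x - (N\<^sup>2 - 1) * y, N * y - x) = qform (N\<^sup>2 - 1) (x, y)"
  by (simp add: qform_def power2_eq_square algebra_simps)

lemma qform_descent_step:
  fixes N m x y :: int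
  assumes N: "N \<ge> 2" and m: "2 - 2 * N < m" "m \<le> 0"
    and xy: "x \<ge> 0" "y > 0" and q: "qform (N\<^sup>2 - 1) (x, y) = m"
  shows "0 < N * y - x" and "N * y - x < y"
proof -
  have x2: "x\<^sup>2 = (N\<^sup>2 - 1) * y\<^sup>2 + m"
    using q by (simp add: qform_def)
  have "(N * y)\<^sup>2 = (N\<^sup>2 - 1) * y\<^sup>2 + y\<^sup>2"
    by (simp add: power_mult_distrib algebra_simps)
  moreover have "y\<^sup>2 > 0"
    using xy by simp
  ultimately have "x\<^sup>2 < (N * y)\<^sup>2"
    using x2 m by linarith
  then have "x < N * y"
    using xy N by (intro power_less_imp_less_base[of x 2]) auto
  then show "0 < N * y - x" by simp
  have "(2 * N - 2) * 1 \<le> (2 * N - 2) * y\<^sup>2"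
    using N xy by (intro mult_left_mono) (auto simp: one_le_power)
  then have "((N - 1) * y)\<^sup>2 < x\<^sup>2"
    using x2 m by (simp add: power2_eq_square algebra_simps)
  then have "(N - 1) * y < x"
    using xy(1) by (rule power_less_imp_less_base)
  then show "N * y - x < y" by (simp add: algebra_simps)
qed

lemma qform_square_minus_one_eq_zero:
  fixes N m :: int and v :: "int \<times> int"
  assumes N: "N \<ge> 2" and m: "2 - 2 * N < m" "m \<le> 0" and q: "qform (N\<^sup>2 - 1) v = m"
  shows "v = (0, 0)"
proof -
  have y_eq_0: "y = 0" if "y \<ge> 0" "qform (N\<^sup>2 - 1) (x, y) = m" for x y
    using that
  proof (induction "nat y" arbitrary: x y rule: less_induct)
    case less
    show "y = 0"
    proof (rule ccontr)
      assume "y \<noteq> 0"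
      with less.prems have y: "y > 0" by simp
      have q_abs: "qform (N\<^sup>2 - 1) (\<bar>x\<bar>, y) = m"
        using less.prems by (simp add: qform_def)
      note step = qform_descent_step[OF N m abs_ge_zero y q_abs]
      have "qform (N\<^sup>2 - 1) (N * \<bar>x\<bar> - (N\<^sup>2 - 1) * y, N * y - \<bar>x\<bar>) = m"
        using q_abs qform_mult_unit by simp
      with step less.hyps[of "N * y - \<bar>x\<bar>"] have "N * y - \<bar>x\<bar> = 0"
        by simp
      with step show False by simp
    qed
  qed
  obtain x y where v: "v = (x, y)" by fastforce
  have "\<bar>y\<bar> = 0"
    using q v by (intro y_eq_0[of _ x]) (auto simp: qform_def)
  with q v m have "x\<^sup>2 \<le> 0" by (simp add: qform_def)
  with \<open>\<bar>y\<bar> = 0\<close> v show ?thesis by simp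
qed

lemma not_represents_square_minus_one:
  fixes N k :: int
  assumes "N \<ge> 2" and "0 \<le> k" and "k < 2 * N - 2"
  shows "\<not> represents (N\<^sup>2 - 1) (- k)"
  using assms qform_square_minus_one_eq_zero[of N "- k"] by (auto simp: represents_def)

lemma mu_square_minus_one:
  fixes N :: int
  assumes N: "N \<ge> 2"
  shows "mu (N\<^sup>2 - 1) = 2 - 2 * N"
  unfolding mu_def
proof (rule Greatest_equality)
  have "qform (N\<^sup>2 - 1) (N - 1, 1) = 2 - 2 * N"
    by (simp add: qform_def power2_eq_square algebra_simps)
  then show "2 - 2 * N < 0 \<and> (\<exists>v. qform (N\<^sup>2 - 1) v = 2 - 2 * N)"
    using N by auto
next
  fix m assume "m < 0 \<and> (\<exists>v. qform (N\<^sup>2 - 1) v = m)"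
  then obtain v where "m < 0" "qform (N\<^sup>2 - 1) v = m" by blast
  then show "m \<le> 2 - 2 * N"
    using qform_square_minus_one_eq_zero[OF N, of m v] by (force simp: qform_def)
qed

lemma square_minus_one_avoids_small_negatives:
  fixes N n :: int
  assumes N: "N \<ge> 2" and n: "n < 2 * N - 2"
  shows "\<not> has_isotropic (N\<^sup>2 - 1) \<and> mu (N\<^sup>2 - 1) < - n
    \<and> (\<forall>k\<in>{0..n}. \<not> represents (N\<^sup>2 - 1) (- k))"
  using assms mu_square_minus_one[OF N] not_represents_square_minus_one[OF N]
    not_represents_square_minus_one[OF N, of 0]
  by (auto simp: has_isotropic_def)

theorem proposition2p3:
  fixes n b :: int
  assumes "n > 0" and "b > 0"
  shows "infinite {a::int. a > 0 \<and> \<not> has_isotropic (a * b) \<and> mu (a * b) < - n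
           \<and> (\<forall>k\<in>{0..n}. \<not> represents (a * b) (- k))}"
    (is "infinite ?S")
proof -
  have member: "t * (b * t + 2) \<in> ?S \<and> t \<le> t * (b * t + 2)" if t: "t \<ge> n" for t
  proof -
    have "t \<le> b * t"
      using t assms by simp
    then have bound: "n < 2 * (b * t + 1) - 2"
      using t assms by arith
    have ab: "t * (b * t + 2) * b = (b * t + 1)\<^sup>2 - 1"
      by (simp add: power2_eq_square algebra_simps)
    have "t \<le> t * (b * t + 2)"
      using t assms by (simp add: mult_le_cancel_left1)
    with ab bound t assms show ?thesis
      using square_minus_one_avoids_small_negatives[of "b * t + 1" n] by simp
  qed
  have "\<exists>a\<in>?S. \<bar>a\<bar> \<ge> m" for m
    using member[of "max n m"] by force
  then show ?thesis
    unfolding infinite_int_iff_unbounded_le by blast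
qed

end
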